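(* Let $k=\mathbb{F}_3$, let $O_7(k)$ be the group of $7\times7$ matrices over $k$ orthogonal for the bilinear form $\langle x,y\rangle=x_1y_7+x_2y_6+\dots+x_7y_1$ on $k^7$, and let \[ A=\begin{pmatrix} 0&0&1&0&0&1&0\\ 1&0&0&0&0&0&1\\ 0&1&0&0&0&0&0\\ 0&0&0&0&0&0&0\\ 0&1&0&0&0&0&1\\ 0&0&1&0&1&0&0\\ 0&0&0&0&0&1&0 \end{pmatrix}. \] Then there is no $g\in O_7(k)$ such that $M=g^{-1}Ag$ satisfies $M_{ij}=0$ for all $i\in\{5,6,7\}$ and $j\in\{1,2,3\}$.
   Context: $M_{ij}$ denotes the entry in row $i$ and column $j$. *)

theory Defs
  imports "Jordan_Normal_Form.Matrix" "Berlekamp_Zassenhaus.Finite_Field"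
begin

text \<open>An auxiliary three-element type; the field k = F_3 is rendered as
  the prime field \<open>three mod_ring\<close> (integers modulo CARD(three) = 3).\<close>

typedef three = "{0::nat, 1, 2}" by auto

lemma card_three: "CARD(three) = 3"
  using type_definition.card[OF type_definition_three] by simp

instance three :: finite
proof
  show "finite (UNIV :: three set)"
    using type_definition_three finite_imageI
    by (metis Abs_three_cases finite.emptyI finite_insert finite_subset subsetI
        type_definition.Abs_image)
qed

instance three :: prime_card
  by standard (simp add: card_three)

type_synonym F3 = "three mod_ring"

text \<open>The Gram matrix of the bilinear form
  x_1 y_7 + x_2 y_6 + ... + x_7 y_1 (0-indexed: entry (i,j) is 1 iff i + j = 6).\<close>
definition J7 :: "F3 mat" where
  "J7 = mat 7 7 (\<lambda>(i, j). if i + j = 6 then 1 else 0)"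

definition O7 :: "F3 mat set" where
  "O7 = {g \<in> carrier_mat 7 7. transpose_mat g * J7 * g = J7}"

definition A7 :: "F3 mat" where
  "A7 = mat_of_rows_list 7
    [[0,0,1,0,0,1,0],
     [1,0,0,0,0,0,1],
     [0,1,0,0,0,0,0],
     [0,0,0,0,0,0,0],
     [0,1,0,0,0,0,1],
     [0,0,1,0,1,0,0],
     [0,0,0,0,0,1,0]]"

end

theory Submission
  imports Defs "Jordan_Normal_Form.Determinant"
begin

text \<open>Suppose \<open>M = g\<inverse> A g\<close> has vanishing lower-left \<open>3 \<times> 3\<close> block, and let \<open>W\<close> be the span
  of the first three standard basis vectors. Then \<open>M\<close> maps \<open>W\<close> into \<open>W \<oplus> \<langle>e\<^sub>4\<rangle>\<close>, so the two linear
  conditions "the fourth coordinates of \<open>M c\<close> and \<open>M\<^sup>2 c\<close> vanish" leave a nonzero \<open>c \<in> W\<close> with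
  \<open>M c, M\<^sup>2 c \<in> W\<close>. Since \<open>W\<close> is totally isotropic and \<open>g\<close> is an isometry, \<open>s = g c \<noteq> 0\<close> spans,
  together with \<open>A s\<close> and \<open>A\<^sup>2 s\<close>, a totally isotropic subspace. An exhaustive search over the
  \<open>3\<^sup>7\<close> vectors of \<open>k\<^sup>7\<close> shows that no such \<open>s\<close> exists.\<close>

definition totally_isotropic :: "'a::comm_ring mat \<Rightarrow> 'a vec set \<Rightarrow> bool" where
  "totally_isotropic J S \<longleftrightarrow> (\<forall>x\<in>S. \<forall>y\<in>S. x \<bullet> (J *\<^sub>v y) = 0)"

lemma totally_isotropic_subset:
  "S \<subseteq> T \<Longrightarrow> totally_isotropic J T \<Longrightarrow> totally_isotropic J S"
  unfolding totally_isotropic_def by blast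

lemma isometry_preserves_form:
  fixes g J :: "'a::comm_ring mat"
  assumes g: "g \<in> carrier_mat n n" and J: "J \<in> carrier_mat n n"
    and gJg: "transpose_mat g * J * g = J"
    and x: "x \<in> carrier_vec n" and y: "y \<in> carrier_vec n"
  shows "(g *\<^sub>v x) \<bullet> (J *\<^sub>v (g *\<^sub>v y)) = x \<bullet> (J *\<^sub>v y)"
proof -
  have "(g *\<^sub>v x) \<bullet> (J *\<^sub>v (g *\<^sub>v y)) = (J *\<^sub>v (g *\<^sub>v y)) \<bullet> (g *\<^sub>v x)"
    using g J x y by (intro comm_scalar_prod[of _ n]) auto
  also have "\<dots> = (transpose_mat g *\<^sub>v (J *\<^sub>v (g *\<^sub>v y))) \<bullet> x"
    using g J x y by (intro transpose_vec_mult_scalar[symmetric]) auto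
  also have "\<dots> = ((transpose_mat g * J * g) *\<^sub>v y) \<bullet> x"
    using g J y by (simp add: assoc_mult_mat_vec[of _ n n _ n])
  also have "\<dots> = x \<bullet> (J *\<^sub>v y)"
    unfolding gJg using J x y by (intro comm_scalar_prod[of _ n]) auto
  finally show ?thesis .
qed

lemma totally_isotropic_image:
  fixes g J :: "'a::comm_ring mat"
  assumes "g \<in> carrier_mat n n" "J \<in> carrier_mat n n" "transpose_mat g * J * g = J"
    and "S \<subseteq> carrier_vec n" "totally_isotropic J S"
  shows "totally_isotropic J ((*\<^sub>v) g ` S)"
  using assms(5) isometry_preserves_form[OF assms(1-3)] subsetD[OF assms(4)]
  unfolding totally_isotropic_def by auto

lemma conjugate_mult_mat_vec:
  fixes g ginv A :: "'a::semiring_1 mat"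
  assumes g: "g \<in> carrier_mat n n" and ginv: "ginv \<in> carrier_mat n n" and A: "A \<in> carrier_mat n n"
    and inv: "g * ginv = 1\<^sub>m n" and v: "v \<in> carrier_vec n"
  shows "A *\<^sub>v (g *\<^sub>v v) = g *\<^sub>v ((ginv * A * g) *\<^sub>v v)"
proof -
  have "g *\<^sub>v ((ginv * A * g) *\<^sub>v v) = (g * ginv) *\<^sub>v (A *\<^sub>v (g *\<^sub>v v))"
    using g ginv A v by (simp add: assoc_mult_mat_vec[of _ n n _ n])
  also have "\<dots> = A *\<^sub>v (g *\<^sub>v v)"
    unfolding inv using A g v by (intro one_mult_mat_vec) simp
  finally show ?thesis ..
qed

lemma conjugate_Krylov_image:
  fixes g ginv A :: "'a::semiring_1 mat"
  defines "M \<equiv> ginv * A * g"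
  assumes g: "g \<in> carrier_mat n n" and ginv: "ginv \<in> carrier_mat n n" and A: "A \<in> carrier_mat n n"
    and inv: "g * ginv = 1\<^sub>m n" and v: "v \<in> carrier_vec n"
  shows "{g *\<^sub>v v, A *\<^sub>v (g *\<^sub>v v), A *\<^sub>v (A *\<^sub>v (g *\<^sub>v v))} = (*\<^sub>v) g ` {v, M *\<^sub>v v, M *\<^sub>v (M *\<^sub>v v)}"
proof -
  have "M \<in> carrier_mat n n"
    using g ginv A by (simp add: M_def)
  then have "M *\<^sub>v v \<in> carrier_vec n"
    using v by simp
  then show ?thesis
    using conjugate_mult_mat_vec[OF g ginv A inv] v unfolding M_def by simp
qed

lemma left_invertible_mult_mat_vec_eq_0:
  fixes g ginv :: "'a::semiring_1 mat"
  assumes g: "g \<in> carrier_mat n n" and ginv: "ginv \<in> carrier_mat n n" and inv: "ginv * g = 1\<^sub>m n"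
    and v: "v \<in> carrier_vec n" and gv: "g *\<^sub>v v = 0\<^sub>v n"
  shows "v = 0\<^sub>v n"
proof -
  have "v = (ginv * g) *\<^sub>v v"
    using inv v by simp
  also have "\<dots> = ginv *\<^sub>v 0\<^sub>v n"
    using g ginv v gv by simp
  also have "\<dots> = 0\<^sub>v n"
    using ginv by (intro eq_vecI) auto
  finally show ?thesis .
qed

lemma exists_nonzero_vec_orthogonal:
  fixes ws :: "'a::field vec list"
  assumes ws: "set ws \<subseteq> carrier_vec n" and len: "length ws < n"
  shows "\<exists>v\<in>carrier_vec n. v \<noteq> 0\<^sub>v n \<and> (\<forall>w\<in>set ws. w \<bullet> v = 0)"
proof -
  define rows where "rows i = (if i < length ws then ws ! i else 0\<^sub>v n)" for i
  define B where "B = mat\<^sub>r n n rows"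
  have rows: "rows i \<in> carrier_vec n" for i
    using ws nth_mem by (fastforce simp: rows_def)
  have B: "B \<in> carrier_mat n n" by (simp add: B_def)
  have "B = mat\<^sub>r n n (\<lambda>i. if i = n - 1 then 0\<^sub>v n else rows i)"
    unfolding B_def using len by (intro arg_cong[of _ _ "mat\<^sub>r n n"]) (auto simp: rows_def)
  moreover have "det (mat\<^sub>r n n (\<lambda>i. if i = n - 1 then 0\<^sub>v n else rows i)) = 0"
    using len rows by (intro det_row_0) auto
  ultimately have "det B = 0" by simp
  then obtain v where v: "v \<in> carrier_vec n" "v \<noteq> 0\<^sub>v n" "B *\<^sub>v v = 0\<^sub>v n"
    using det_0_iff_vec_prod_zero_field[OF B] by blast
  have "w \<bullet> v = 0" if w: "w \<in> set ws" for w
  proof -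
    obtain i where i: "i < length ws" "w = ws ! i"
      using w by (auto simp: in_set_conv_nth)
    then have "row B i = w"
      using len rows[of i] by (simp add: B_def rows_def)
    then have "w \<bullet> v = (B *\<^sub>v v) $ i"
      using i len B by simp
    then show ?thesis
      using v(3) i len by simp
  qed
  then show ?thesis using v by blast
qed

lemma vec_of_list_eq_zero_iff: "vec_of_list xs = 0\<^sub>v n \<longleftrightarrow> xs = replicate n 0"
  by (metis list_of_vec_0 list_vec vec_list)

lemma vec_of_list_entries_7:
  "v \<in> carrier_vec 7 \<Longrightarrow> vec_of_list [v $ 0, v $ 1, v $ 2, v $ 3, v $ 4, v $ 5, v $ 6] = v"
  by (rule eq_vecI) (auto simp: vec_of_list_index less_Suc_eq numeral_eq_Suc)

lemma of_int_scalar_prod: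
  fixes v w :: "int vec"
  assumes "v \<in> carrier_vec n" "w \<in> carrier_vec n"
  shows "map_vec of_int v \<bullet> map_vec of_int w = (of_int (v \<bullet> w) :: 'a::comm_ring_1)"
  using assms by (simp add: scalar_prod_def of_int_sum)

lemma map_vec_of_int_to_int_mod_ring:
  "map_vec of_int (map_vec to_int_mod_ring v) = (v :: 'a::nontriv mod_ring vec)"
  by (rule eq_vecI) (simp_all add: of_int_of_int_mod_ring)

lemma of_int_F3_eq_0_iff: "(of_int z :: F3) = 0 \<longleftrightarrow> z mod 3 = 0"
  using of_int_eq_0_iff_char_dvd[where 'a = F3, of z] by (simp add: card_three dvd_eq_mod_eq_0)

lemma to_int_mod_ring_F3: "to_int_mod_ring (x :: F3) \<in> {0, 1, 2}"
proof -
  have "to_int_mod_ring x \<in> {0..<3}"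
    using rangeI[of to_int_mod_ring x] unfolding range_to_int_mod_ring card_three by simp
  also have "{0..<3} = {0, 1, 2 :: int}"
    by auto
  finally show ?thesis .
qed

lemma A7_carrier: "A7 \<in> carrier_mat 7 7"
  unfolding A7_def mat_of_rows_list_def by (rule carrier_matI) simp_all

lemma J7_carrier: "J7 \<in> carrier_mat 7 7"
  by (simp add: J7_def)

lemma J7_form:
  assumes x: "x \<in> carrier_vec 7" and y: "y \<in> carrier_vec 7"
  shows "x \<bullet> (J7 *\<^sub>v y) = (\<Sum>i<7. x $ i * y $ (6 - i))"
proof -
  have "(J7 *\<^sub>v y) $ i = y $ (6 - i)" if i: "i < 7" for i
  proof -
    have "(J7 *\<^sub>v y) $ i = (\<Sum>j<7. (if i + j = 6 then 1 else 0) * y $ j)"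
      using i y by (simp add: J7_def scalar_prod_def atLeast0LessThan)
    also have "\<dots> = (\<Sum>j<7. if j = 6 - i then y $ j else 0)"
      using i by (intro sum.cong) auto
    also have "\<dots> = y $ (6 - i)"
      using i by simp
    finally show ?thesis .
  qed
  then show ?thesis
    using x J7_carrier by (simp add: scalar_prod_def atLeast0LessThan)
qed

definition first_three_coords :: "'a::zero vec set" where
  "first_three_coords = {v \<in> carrier_vec 7. \<forall>i\<in>{3, 4, 5, 6}. v $ i = 0}"

lemma first_three_coordsD: "v \<in> first_three_coords \<Longrightarrow> i \<in> {3, 4, 5, 6} \<Longrightarrow> v $ i = 0"
  unfolding first_three_coords_def by blast

lemma totally_isotropic_first_three_coords: "totally_isotropic J7 first_three_coords"
  unfolding totally_isotropic_def
proof (intro ballI)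
  fix x y :: "F3 vec"
  assume x: "x \<in> first_three_coords" and y: "y \<in> first_three_coords"
  have "x $ i * y $ (6 - i) = 0" if "i < 7" for i
  proof (cases "i < 3")
    case True
    then have "6 - i \<in> {3, 4, 5, 6}" by auto
    then show ?thesis using y by (simp add: first_three_coordsD)
  next
    case False
    then have "i \<in> {3, 4, 5, 6}" using that by auto
    then show ?thesis using x by (simp add: first_three_coordsD)
  qed
  then have "(\<Sum>i<7. x $ i * y $ (6 - i)) = 0"
    by (intro sum.neutral) simp
  then show "x \<bullet> (J7 *\<^sub>v y) = 0"
    using x y by (simp add: J7_form first_three_coords_def)
qed

lemma mult_mat_vec_first_three_coords:
  fixes M :: "'a::semiring_0 mat"
  assumes M: "M \<in> carrier_mat 7 7"
    and block: "\<forall>i\<in>{4, 5, 6}. \<forall>j\<in>{0, 1, 2}. M $$ (i, j) = 0"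
    and v: "v \<in> first_three_coords" and Mv3: "(M *\<^sub>v v) $ 3 = 0"
  shows "M *\<^sub>v v \<in> first_three_coords"
proof -
  have lower: "(M *\<^sub>v v) $ i = 0" if i: "i \<in> {4, 5, 6}" for i
  proof -
    have "M $$ (i, j) * v $ j = 0" if j: "j < 7" for j
    proof (cases "j < 3")
      case True
      then have "j \<in> {0, 1, 2}" by auto
      then show ?thesis using block i by auto
    next
      case False
      then have "j \<in> {3, 4, 5, 6}" using j by auto
      then show ?thesis using v by (simp add: first_three_coordsD)
    qed
    then show ?thesis
      using M v i by (auto simp: first_three_coords_def scalar_prod_def intro!: sum.neutral)
  qed
  show ?thesis
    using lower[of 4] lower[of 5] lower[of 6] M v Mv3 by (auto simp: first_three_coords_def)
qed

lemma block_triangular_Krylov_vector: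
  fixes M :: "'a::field mat"
  assumes M: "M \<in> carrier_mat 7 7"
    and block: "\<forall>i\<in>{4, 5, 6}. \<forall>j\<in>{0, 1, 2}. M $$ (i, j) = 0"
  shows "\<exists>c\<in>first_three_coords. c \<noteq> 0\<^sub>v 7 \<and>
           M *\<^sub>v c \<in> first_three_coords \<and> M *\<^sub>v (M *\<^sub>v c) \<in> first_three_coords"
proof -
  let ?ws = "[unit_vec 7 3, unit_vec 7 4, unit_vec 7 5, unit_vec 7 6, row M 3, row (M * M) 3]"
  have "set ?ws \<subseteq> carrier_vec 7"
    using M by (auto simp: carrier_vecI)
  then obtain c where c: "c \<in> carrier_vec 7" "c \<noteq> 0\<^sub>v 7" and orth: "\<forall>w\<in>set ?ws. w \<bullet> c = 0"
    using exists_nonzero_vec_orthogonal[of ?ws 7] by auto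
  have c_first: "c \<in> first_three_coords"
    using c orth by (auto simp: first_three_coords_def)
  have "(M *\<^sub>v c) $ 3 = 0"
    using M orth by simp
  then have Mc: "M *\<^sub>v c \<in> first_three_coords"
    by (rule mult_mat_vec_first_three_coords[OF M block c_first])
  have "(M *\<^sub>v (M *\<^sub>v c)) $ 3 = row (M * M) 3 \<bullet> c"
    using M c by (simp flip: assoc_mult_mat_vec)
  then have "M *\<^sub>v (M *\<^sub>v c) \<in> first_three_coords"
    using orth by (intro mult_mat_vec_first_three_coords[OF M block Mc]) simp
  then show ?thesis
    using c c_first Mc by blast
qed

text \<open>The type \<open>F3\<close> has no executable arithmetic, so the exhaustive search runs over the
  integers; the lifts below have the representatives \<open>0, 1, 2\<close> as entries.\<close>

definition A7_int :: "int mat" where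
  "A7_int = map_mat to_int_mod_ring A7"

definition J7_int :: "int mat" where
  "J7_int = map_mat to_int_mod_ring J7"

lemma A7_int_carrier: "A7_int \<in> carrier_mat 7 7"
  using A7_carrier by (simp add: A7_int_def)

lemma J7_int_carrier: "J7_int \<in> carrier_mat 7 7"
  using J7_carrier by (simp add: J7_int_def)

lemma map_mat_of_int_A7_int: "map_mat of_int A7_int = A7"
  by (rule eq_matI) (simp_all add: A7_int_def of_int_of_int_mod_ring)

lemma map_mat_of_int_J7_int: "map_mat of_int J7_int = J7"
  by (rule eq_matI) (simp_all add: J7_int_def of_int_of_int_mod_ring)

lemma A7_mult_map_vec_of_int:
  assumes "x \<in> carrier_vec 7"
  shows "A7 *\<^sub>v map_vec of_int x = map_vec (of_int :: int \<Rightarrow> F3) (A7_int *\<^sub>v x)"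
proof -
  have "map_vec (of_int :: int \<Rightarrow> F3) (A7_int *\<^sub>v x) = map_mat of_int A7_int *\<^sub>v map_vec of_int x"
    by (rule of_int_hom.mult_mat_vec_hom[OF A7_int_carrier assms])
  then show ?thesis
    by (simp add: map_mat_of_int_A7_int)
qed

lemma J7_form_map_vec_of_int:
  assumes x: "x \<in> carrier_vec 7" and y: "y \<in> carrier_vec 7"
  shows "map_vec of_int x \<bullet> (J7 *\<^sub>v map_vec of_int y) = (of_int (x \<bullet> (J7_int *\<^sub>v y)) :: F3)"
proof -
  have "map_vec (of_int :: int \<Rightarrow> F3) (J7_int *\<^sub>v y) = map_mat of_int J7_int *\<^sub>v map_vec of_int y"
    by (rule of_int_hom.mult_mat_vec_hom[OF J7_int_carrier y])
  then have "J7 *\<^sub>v map_vec of_int y = map_vec (of_int :: int \<Rightarrow> F3) (J7_int *\<^sub>v y)"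
    by (simp add: map_mat_of_int_J7_int)
  then show ?thesis
    using J7_int_carrier x y by (simp add: of_int_scalar_prod[of _ 7])
qed

lemma A7_int_mult_vec_of_list:
  "A7_int *\<^sub>v vec_of_list [a0, a1, a2, a3, a4, a5, a6] =
     vec_of_list [a2 + a5, a0 + a6, a1, 0, a1 + a6, a2 + a4, a5]"
  by (rule eq_vecI)
    (auto simp: A7_int_def A7_def mat_of_rows_list_def scalar_prod_def less_Suc_eq numeral_eq_Suc)

lemma J7_int_form_vec_of_list:
  "vec_of_list [x0, x1, x2, x3, x4, x5, x6] \<bullet> (J7_int *\<^sub>v vec_of_list [y0, y1, y2, y3, y4, y5, y6]) =
     x0 * y6 + x1 * y5 + x2 * y4 + x3 * y3 + x4 * y2 + x5 * y1 + x6 * y0"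
  by (simp add: J7_int_def J7_def scalar_prod_def numeral_eq_Suc vec_of_list_index
      del: vec_of_list_Cons)

lemma A7_int_Krylov_mod_3_exhaustive:
  "\<forall>a0\<in>{0::int, 1, 2}. \<forall>a1\<in>{0::int, 1, 2}. \<forall>a2\<in>{0::int, 1, 2}. \<forall>a3\<in>{0::int, 1, 2}.
   \<forall>a4\<in>{0::int, 1, 2}. \<forall>a5\<in>{0::int, 1, 2}. \<forall>a6\<in>{0::int, 1, 2}.
     let t0 = vec_of_list [a0, a1, a2, a3, a4, a5, a6]; t1 = A7_int *\<^sub>v t0; t2 = A7_int *\<^sub>v t1 in
     (\<forall>(x, y)\<in>{(t0, t0), (t0, t1), (t0, t2), (t1, t1), (t1, t2), (t2, t2)}.
        x \<bullet> (J7_int *\<^sub>v y) mod 3 = 0) \<longrightarrow> t0 = 0\<^sub>v 7"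
  unfolding Let_def ball_simps prod.case A7_int_mult_vec_of_list J7_int_form_vec_of_list
    vec_of_list_eq_zero_iff
  by code_simp

lemma A7_int_Krylov_orthogonal_mod_3_imp_zero:
  fixes t :: "int vec"
  defines "K \<equiv> {t, A7_int *\<^sub>v t, A7_int *\<^sub>v (A7_int *\<^sub>v t)}"
  assumes t: "t \<in> carrier_vec 7" and digits: "\<And>i. i < 7 \<Longrightarrow> t $ i \<in> {0, 1, 2}"
    and orth: "\<And>x y. x \<in> K \<Longrightarrow> y \<in> K \<Longrightarrow> x \<bullet> (J7_int *\<^sub>v y) mod 3 = 0"
  shows "t = 0\<^sub>v 7"
proof -
  have "t $ 0 \<in> {0, 1, 2}" "t $ 1 \<in> {0, 1, 2}" "t $ 2 \<in> {0, 1, 2}" "t $ 3 \<in> {0, 1, 2}"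
    "t $ 4 \<in> {0, 1, 2}" "t $ 5 \<in> {0, 1, 2}" "t $ 6 \<in> {0, 1, 2}"
    by (rule digits; simp)+
  from A7_int_Krylov_mod_3_exhaustive[rule_format, OF this] show ?thesis
    using orth unfolding Let_def vec_of_list_entries_7[OF t] K_def by auto
qed

lemma A7_no_isotropic_Krylov_vector:
  assumes s: "s \<in> carrier_vec 7" and iso: "totally_isotropic J7 {s, A7 *\<^sub>v s, A7 *\<^sub>v (A7 *\<^sub>v s)}"
  shows "s = 0\<^sub>v 7"
proof -
  define t where "t = map_vec to_int_mod_ring s"
  define K where "K = {t, A7_int *\<^sub>v t, A7_int *\<^sub>v (A7_int *\<^sub>v t)}"
  have t: "t \<in> carrier_vec 7" and K: "K \<subseteq> carrier_vec 7"
    using s A7_int_carrier by (auto simp: t_def K_def)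
  have s_t: "map_vec of_int t = s"
    by (simp add: t_def map_vec_of_int_to_int_mod_ring)
  have K_s: "map_vec of_int ` K = {s, A7 *\<^sub>v s, A7 *\<^sub>v (A7 *\<^sub>v s)}"
    using t A7_int_carrier by (simp add: K_def A7_mult_map_vec_of_int[symmetric] s_t)
  have "x \<bullet> (J7_int *\<^sub>v y) mod 3 = 0" if x: "x \<in> K" and y: "y \<in> K" for x y
  proof -
    have "map_vec of_int x \<bullet> (J7 *\<^sub>v map_vec of_int y) = 0"
      using iso x y unfolding totally_isotropic_def K_s[symmetric] by blast
    then show ?thesis
      using x y K by (simp add: J7_form_map_vec_of_int subset_iff of_int_F3_eq_0_iff)
  qed
  moreover have "t $ i \<in> {0, 1, 2}" if "i < 7" for i
    using s that to_int_mod_ring_F3 by (simp add: t_def)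
  ultimately have "t = 0\<^sub>v 7"
    using A7_int_Krylov_orthogonal_mod_3_imp_zero[OF t] unfolding K_def by blast
  then show ?thesis
    using s_t by (simp add: of_int_hom.vec_hom_zero)
qed

theorem lemma2p6:
  shows "\<not> (\<exists>g \<in> O7. \<exists>ginv \<in> carrier_mat 7 7.
            ginv * g = 1\<^sub>m 7 \<and> g * ginv = 1\<^sub>m 7 \<and>
            (\<forall>i \<in> {4, 5, 6}. \<forall>j \<in> {0, 1, 2}. (ginv * A7 * g) $$ (i, j) = 0))"
proof
  assume "\<exists>g \<in> O7. \<exists>ginv \<in> carrier_mat 7 7.
            ginv * g = 1\<^sub>m 7 \<and> g * ginv = 1\<^sub>m 7 \<and>
            (\<forall>i \<in> {4, 5, 6}. \<forall>j \<in> {0, 1, 2}. (ginv * A7 * g) $$ (i, j) = 0)"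
  then obtain g ginv where g: "g \<in> carrier_mat 7 7" and gJg: "transpose_mat g * J7 * g = J7"
    and ginv: "ginv \<in> carrier_mat 7 7" and left: "ginv * g = 1\<^sub>m 7" and right: "g * ginv = 1\<^sub>m 7"
    and block: "\<forall>i \<in> {4, 5, 6}. \<forall>j \<in> {0, 1, 2}. (ginv * A7 * g) $$ (i, j) = 0"
    unfolding O7_def by blast
  define M where "M = ginv * A7 * g"
  have M: "M \<in> carrier_mat 7 7"
    using ginv A7_carrier g by (simp add: M_def)
  obtain c where c: "c \<noteq> 0\<^sub>v 7" and K: "{c, M *\<^sub>v c, M *\<^sub>v (M *\<^sub>v c)} \<subseteq> first_three_coords"
    using block_triangular_Krylov_vector[OF M block[folded M_def]] by auto
  then have carrier: "{c, M *\<^sub>v c, M *\<^sub>v (M *\<^sub>v c)} \<subseteq> carrier_vec 7"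
    by (auto simp: first_three_coords_def)
  have "totally_isotropic J7 ((*\<^sub>v) g ` {c, M *\<^sub>v c, M *\<^sub>v (M *\<^sub>v c)})"
    by (intro totally_isotropic_image[OF g J7_carrier gJg carrier]
        totally_isotropic_subset[OF K totally_isotropic_first_three_coords])
  then have "totally_isotropic J7 {g *\<^sub>v c, A7 *\<^sub>v (g *\<^sub>v c), A7 *\<^sub>v (A7 *\<^sub>v (g *\<^sub>v c))}"
    using conjugate_Krylov_image[OF g ginv A7_carrier right, of c, folded M_def] carrier by simp
  then have "g *\<^sub>v c = 0\<^sub>v 7"
    using g carrier by (intro A7_no_isotropic_Krylov_vector) auto
  then show False
    using left_invertible_mult_mat_vec_eq_0[OF g ginv left] carrier c by auto
qed

end
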